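(* Let $A\in\mathbb{R}^{m\times n}$ with $m\le n$, let $\lambda>0$, and let $D=\begin{bmatrix}A&\sqrt{\lambda}I_m\end{bmatrix}$ have economy SVD $D=U_D\Sigma_D\begin{bmatrix}V_1^T&V_2^T\end{bmatrix}$, where $V_1\in\mathbb{R}^{n\times m}$ consists of the first $n$ rows of the matrix of right singular vectors. Let $X\in\mathbb{R}^{n\times s}$ and suppose that for some $0<\epsilon<1$, $$\|V_1^TXX^TV_1-V_1^TV_1\|_2\le\epsilon .$$ Let $R\in\mathbb{R}^{m\times m}$ be any matrix with $R^TR=(AX)(AX)^T+\lambda I_m$. Then $$\kappa_2(R^{-T}D)\le\sqrt{\frac{1+\epsilon}{1-\epsilon}}.$$
   Context: $\|\cdot\|_2$ is the spectral norm; $\kappa_2(M)$ for the full-row-rank $m\times(n+m)$ matrix $M$ is the ratio of its largest to smallest of its $m$ singular values. $R$ is invertible since $R^TR$ is positive definite. *)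

theory Defs
  imports "HOL-Analysis.Analysis"
begin

definition spec_norm :: "real^'c^'r \<Rightarrow> real" where
  "spec_norm M = onorm (\<lambda>x. M *v x)"

text \<open>The singular values of an r x c matrix M (r rows, full row rank case of interest):
  square roots of the eigenvalues of M M^T (there are r of them, counted with multiplicity).\<close>
definition sing_vals :: "real^'c^'r \<Rightarrow> real set" where
  "sing_vals M = {sqrt \<mu> | \<mu>. \<exists>v. v \<noteq> 0 \<and> (M ** transpose M) *v v = \<mu> *s v}"

definition kappa2 :: "real^'c^'r \<Rightarrow> real" where
  "kappa2 M = Max (sing_vals M) / Min (sing_vals M)"

definition diag_mat :: "real^'m \<Rightarrow> real^'m^'m" where
  "diag_mat d = (\<chi> i j. if i = j then d $ i else 0)"

text \<open>The augmented matrix D = [A, sqrt(lam) I_m].\<close>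
definition aug_mat :: "real^'n^'m \<Rightarrow> real \<Rightarrow> real^('n + 'm)^'m" where
  "aug_mat A lam = (\<chi> i j. case j of Inl k \<Rightarrow> A $ i $ k | Inr k \<Rightarrow> (if k = i then sqrt lam else 0))"

definition top_rows :: "real^'m^('n + 'm) \<Rightarrow> real^'m^'n" where
  "top_rows V = (\<chi> i j. V $ Inl i $ j)"

end

(*
  For an eigenvector v of M M^T, where M = R^-T D, put w = R^-1 v. The eigenvalue equation
  becomes D D^T w = \<mu> R^T R w, so \<mu> = |D^T w|^2 / |R w|^2. Since D^T = V (U \<Sigma>)^T, we can
  write D^T w = V y, so |D^T w| = |y|, the top block of D^T w is A^T w = V_1 y and the bottom
  block is sqrt \<lambda> w. Together with R^T R = (A X)(A X)^T + \<lambda> I this gives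
    |R w|^2 - |D^T w|^2 = |X^T V_1 y|^2 - |V_1 y|^2 = y^T (V_1^T X X^T V_1 - V_1^T V_1) y,
  which is at most \<epsilon> |y|^2 in absolute value. Hence every eigenvalue of M M^T lies in
  [1/(1+\<epsilon>), 1/(1-\<epsilon>)], and the ratio of the extreme singular values of M is at most
  sqrt ((1+\<epsilon>)/(1-\<epsilon>)).
*)
theory Submission
  imports Defs
begin

lemma inner_matrix_vector_transpose:
  "(x::real^'r) \<bullet> (M *v y) = (transpose M *v x) \<bullet> (y::real^'c)"
  by (simp add: dot_lmul_matrix)

lemma inner_gram_matrix: "(x::real^'c) \<bullet> ((transpose B ** B) *v x) = (norm (B *v x))\<^sup>2"
  by (simp add: power2_norm_eq_inner inner_matrix_vector_transpose matrix_vector_mul_assoc[symmetric]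
      inner_commute)

lemma norm_orthonormal_columns:
  assumes "transpose V ** V = mat 1"
  shows "norm (V *v y) = norm (y::real^'c)"
  using inner_gram_matrix[of y V] by (simp add: assms power2_norm_eq_inner norm_eq_sqrt_inner)

lemma inner_symmetric_matrix:
  fixes N :: "real^'m^'m"
  assumes "transpose N = N"
  shows "x \<bullet> (N *v y) = (N *v x) \<bullet> y"
  using inner_matrix_vector_transpose[of x N y] by (simp only: assms)

lemma psd_symmetric_matrix_kernel:
  fixes F :: "real^'m^'m"
  assumes sym: "transpose F = F" and psd: "\<And>z. 0 \<le> z \<bullet> (F *v z)" and "x \<bullet> (F *v x) = 0"
  shows "F *v x = 0"
proof (rule ccontr)
  assume "F *v x \<noteq> 0"
  define y where "y = F *v x"
  define a where "a = y \<bullet> y"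
  define c where "c = y \<bullet> (F *v y)"
  have "a > 0" using \<open>F *v x \<noteq> 0\<close> by (simp add: a_def y_def)
  have "c \<ge> 0" by (simp add: c_def psd)
  have expand: "0 \<le> t * (t * c - 2 * a)" for t
  proof -
    have "0 \<le> (x - t *\<^sub>R y) \<bullet> (F *v (x - t *\<^sub>R y))" by (rule psd)
    also have "\<dots> = x \<bullet> (F *v x) - t * (x \<bullet> (F *v y)) - t * (y \<bullet> (F *v x)) + t * t * c"
      by (simp add: c_def matrix_vector_mult_diff_distrib matrix_vector_mult_scaleR
          inner_diff_left inner_diff_right algebra_simps)
    also have "x \<bullet> (F *v y) = a"
      by (simp add: inner_symmetric_matrix[OF sym] a_def y_def)
    finally show ?thesis using assms(3) by (simp add: a_def y_def algebra_simps)
  qed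
  define t where "t = a / (c + 1)"
  have "t > 0" using \<open>a > 0\<close> \<open>c \<ge> 0\<close> by (simp add: t_def)
  hence "2 * a \<le> t * c" using expand[of t] by (simp add: zero_le_mult_iff)
  moreover have "t * c \<le> a" using \<open>a > 0\<close> \<open>c \<ge> 0\<close> by (simp add: t_def field_simps)
  ultimately show False using \<open>a > 0\<close> by linarith
qed

(* A maximiser x of z \<bullet> N z on the unit sphere makes (x \<bullet> N x) I - N positive semidefinite,
   with x a null vector of its quadratic form. *)
lemma symmetric_matrix_has_eigenvector:
  fixes N :: "real^'m^'m"
  assumes sym: "transpose N = N"
  shows "\<exists>v \<mu>. v \<noteq> 0 \<and> N *v v = \<mu> *s v"
proof -
  have "sphere (0::real^'m) 1 \<noteq> {}"
    using norm_axis_1[of undefined] by auto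
  moreover have "continuous_on (sphere 0 1) (\<lambda>z::real^'m. z \<bullet> (N *v z))"
    by (intro continuous_intros linear_continuous_on bounded_linear.linear
        matrix_vector_mul_bounded_linear)
  ultimately obtain x where "x \<in> sphere 0 1"
    and max: "\<And>z. z \<in> sphere 0 1 \<Longrightarrow> z \<bullet> (N *v z) \<le> x \<bullet> (N *v x)"
    using continuous_attains_sup[OF compact_sphere] by blast
  hence x: "norm x = 1" by simp
  define l where "l = x \<bullet> (N *v x)"
  define F where "F = l *\<^sub>R mat 1 - N"
  have F: "F *v z = l *\<^sub>R z - N *v z" for z
    by (simp add: F_def matrix_vector_mult_diff_rdistrib scaleR_matrix_vector_assoc[symmetric])
  have "z \<bullet> (N *v z) \<le> l * (z \<bullet> z)" for z
  proof (cases "z = 0")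
    case False
    define u where "u = (1 / norm z) *\<^sub>R z"
    have "u \<bullet> (N *v u) \<le> l" using max[of u] False by (simp add: u_def l_def)
    have zu: "z = norm z *\<^sub>R u" using False by (simp add: u_def)
    have "z \<bullet> (N *v z) = (norm z)\<^sup>2 * (u \<bullet> (N *v u))"
      by (subst (1 2) zu) (simp add: matrix_vector_mult_scaleR power2_eq_square)
    also have "\<dots> \<le> (norm z)\<^sup>2 * l"
      using \<open>u \<bullet> (N *v u) \<le> l\<close> by (simp add: mult_left_mono)
    finally show ?thesis by (simp add: power2_norm_eq_inner mult.commute)
  qed simp
  hence "0 \<le> z \<bullet> (F *v z)" for z by (simp add: F inner_diff_right)
  moreover have "transpose F = F"
    using sym by (simp add: F_def transpose_def vec_eq_iff mat_def)
  moreover have "x \<bullet> (F *v x) = 0"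
    using x by (simp add: F inner_diff_right l_def power2_norm_eq_inner[symmetric])
  ultimately have "F *v x = 0" by (intro psd_symmetric_matrix_kernel)
  hence "N *v x = l *s x" by (simp add: F scalar_mult_eq_scaleR)
  moreover have "x \<noteq> 0" using x by auto
  ultimately show ?thesis by blast
qed

lemma symmetric_matrix_eigenvectors_orthogonal:
  fixes N :: "real^'m^'m"
  assumes "transpose N = N" and "N *v v = \<mu> *s v" and "N *v w = \<nu> *s w" and "\<mu> \<noteq> \<nu>"
  shows "v \<bullet> w = 0"
proof -
  have "\<nu> * (v \<bullet> w) = \<mu> * (v \<bullet> w)"
    using inner_symmetric_matrix[OF assms(1), of v w] assms(2,3) by (simp add: scalar_mult_eq_scaleR)
  thus ?thesis using assms(4) by simp
qed

lemma symmetric_matrix_finite_eigenvalues: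
  fixes N :: "real^'m^'m"
  assumes sym: "transpose N = N"
  shows "finite {\<mu>. \<exists>v. v \<noteq> 0 \<and> N *v v = \<mu> *s v}" (is "finite ?E")
proof -
  define ev where "ev \<mu> = (SOME v. v \<noteq> 0 \<and> N *v v = \<mu> *s v)" for \<mu>
  have ev: "ev \<mu> \<noteq> 0" "N *v ev \<mu> = \<mu> *s ev \<mu>" if "\<mu> \<in> ?E" for \<mu>
    using someI_ex[OF that[simplified]] by (simp_all add: ev_def)
  have "inj_on ev ?E"
  proof (rule inj_onI)
    fix \<mu> \<nu> assume "\<mu> \<in> ?E" "\<nu> \<in> ?E" "ev \<mu> = ev \<nu>"
    hence "\<mu> *\<^sub>R ev \<mu> = \<nu> *\<^sub>R ev \<mu>"
      using ev(2)[OF \<open>\<mu> \<in> ?E\<close>] ev(2)[OF \<open>\<nu> \<in> ?E\<close>] by (simp only: scalar_mult_eq_scaleR)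
    thus "\<mu> = \<nu>" using ev(1)[OF \<open>\<mu> \<in> ?E\<close>] by simp
  qed
  moreover have "independent (ev ` ?E)"
  proof (rule pairwise_orthogonal_independent)
    show "pairwise orthogonal (ev ` ?E)"
      unfolding pairwise_def
    proof (intro ballI impI)
      fix x y assume "x \<in> ev ` ?E" "y \<in> ev ` ?E" "x \<noteq> y"
      obtain \<mu> where \<mu>: "x = ev \<mu>" "\<mu> \<in> ?E" using \<open>x \<in> ev ` ?E\<close> by (rule imageE)
      obtain \<nu> where \<nu>: "y = ev \<nu>" "\<nu> \<in> ?E" using \<open>y \<in> ev ` ?E\<close> by (rule imageE)
      have "\<mu> \<noteq> \<nu>" using \<open>x \<noteq> y\<close> \<mu>(1) \<nu>(1) by auto
      show "orthogonal x y"
        unfolding orthogonal_def \<mu>(1) \<nu>(1)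
        by (rule symmetric_matrix_eigenvectors_orthogonal[OF sym ev(2)[OF \<mu>(2)] ev(2)[OF \<nu>(2)] \<open>\<mu> \<noteq> \<nu>\<close>])
    qed
    show "0 \<notin> ev ` ?E"
    proof
      assume "0 \<in> ev ` ?E"
      then obtain \<mu> where "0 = ev \<mu>" "\<mu> \<in> ?E" by (rule imageE)
      thus False using ev(1) by simp
    qed
  qed
  hence "finite (ev ` ?E)" by (rule independent_bound[THEN conjunct1])
  ultimately show ?thesis by (rule finite_imageD[rotated])
qed

lemma kappa2_le_sqrt_ratio:
  fixes M :: "real^'c^'r"
  assumes "0 < a"
    and bounds: "\<And>\<mu> v. v \<noteq> 0 \<Longrightarrow> (M ** transpose M) *v v = \<mu> *s v \<Longrightarrow> a \<le> \<mu> \<and> \<mu> \<le> b"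
  shows "kappa2 M \<le> sqrt (b / a)"
proof -
  define E where "E = {\<mu>. \<exists>v. v \<noteq> 0 \<and> (M ** transpose M) *v v = \<mu> *s v}"
  have sym: "transpose (M ** transpose M) = M ** transpose M"
    by (simp add: matrix_transpose_mul)
  have S: "sing_vals M = sqrt ` E" unfolding sing_vals_def E_def by auto
  have fin: "finite (sing_vals M)"
    unfolding S E_def by (intro finite_imageI symmetric_matrix_finite_eigenvalues sym)
  have ne: "sing_vals M \<noteq> {}"
    unfolding S E_def using symmetric_matrix_has_eigenvector[OF sym] by blast
  have sing_vals_bounds: "sqrt a \<le> s \<and> s \<le> sqrt b" if "s \<in> sing_vals M" for s
    using that bounds unfolding S E_def by (auto intro: real_sqrt_le_mono)
  have hi: "Max (sing_vals M) \<le> sqrt b" and lo: "sqrt a \<le> Min (sing_vals M)"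
    using fin ne sing_vals_bounds by auto
  have "sqrt a \<le> Max (sing_vals M)"
    using fin ne sing_vals_bounds by (simp add: Max_ge_iff) blast
  hence "0 \<le> Max (sing_vals M)" using \<open>0 < a\<close> by (meson order_trans real_sqrt_ge_zero less_imp_le)
  hence "0 \<le> b" using hi by (meson order_trans real_sqrt_ge_0_iff)
  hence "kappa2 M \<le> sqrt b / sqrt a"
    unfolding kappa2_def using frac_le[OF _ hi _ lo] hi \<open>0 < a\<close> by simp
  thus ?thesis by (simp add: real_sqrt_divide)
qed

lemma matrix_inv_invertible:
  fixes A :: "real^'n^'n"
  assumes "invertible A"
  shows "A ** matrix_inv A = mat 1" and "matrix_inv A ** A = mat 1"
  using someI_ex[OF assms[unfolded invertible_def]] by (simp_all add: matrix_inv_def)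

lemma eigenvalue_preconditioned_gram:
  fixes R :: "real^'m^'m" and D :: "real^'c^'m"
  defines "M \<equiv> matrix_inv (transpose R) ** D"
  assumes "invertible R" and "v \<noteq> 0" and "(M ** transpose M) *v v = \<mu> *s v"
  shows "\<exists>w. R *v w \<noteq> 0 \<and> (norm (transpose D *v w))\<^sup>2 = \<mu> * (norm (R *v w))\<^sup>2"
proof -
  define P where "P = matrix_inv (transpose R)"
  have P_right: "transpose R ** P = mat 1" and P_left: "P ** transpose R = mat 1"
    using matrix_inv_invertible[OF transpose_invertible[OF assms(2)]] by (simp_all add: P_def)
  have RP: "R ** transpose P = mat 1"
    using arg_cong[OF P_left, of transpose] by (simp add: matrix_transpose_mul transpose_mat)
  define w where "w = transpose P *v v"
  have Rw: "R *v w = v"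
    unfolding w_def by (simp only: matrix_vector_mul_assoc RP matrix_vector_mul_lid)
  have cancel: "transpose R *v (P *v u) = u" for u
    by (simp only: matrix_vector_mul_assoc P_right matrix_vector_mul_lid)
  have "D *v (transpose D *v w) = transpose R *v (P *v (D *v (transpose D *v w)))"
    by (simp only: cancel)
  also have "P *v (D *v (transpose D *v w)) = \<mu> *\<^sub>R v"
    using assms(4) unfolding M_def P_def[symmetric] w_def
    by (simp only: matrix_transpose_mul matrix_vector_mul_assoc matrix_mul_assoc scalar_mult_eq_scaleR)
  finally have "D *v (transpose D *v w) = \<mu> *\<^sub>R (transpose R *v (R *v w))"
    by (simp add: Rw matrix_vector_mult_scaleR)
  hence "w \<bullet> (D *v (transpose D *v w)) = \<mu> * (w \<bullet> (transpose R *v (R *v w)))"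
    by simp
  hence "(norm (transpose D *v w))\<^sup>2 = \<mu> * (norm (R *v w))\<^sup>2"
    by (simp add: inner_matrix_vector_transpose power2_norm_eq_inner inner_commute)
  thus ?thesis using Rw assms(3) by auto
qed

lemma norm_sq_matrix_vector_gram:
  fixes R :: "real^'m^'m" and B :: "real^'k^'m"
  assumes "transpose R ** R = B ** transpose B + lam *\<^sub>R mat 1"
  shows "(norm (R *v w))\<^sup>2 = (norm (transpose B *v w))\<^sup>2 + lam * (norm w)\<^sup>2"
proof -
  have "(norm (R *v w))\<^sup>2 = w \<bullet> ((transpose R ** R) *v w)"
    by (rule inner_gram_matrix[symmetric])
  also have "\<dots> = w \<bullet> (B *v (transpose B *v w)) + lam * (w \<bullet> w)"
    by (simp only: assms matrix_vector_mult_add_rdistrib matrix_vector_mul_assoc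
        scaleR_matrix_vector_assoc[symmetric] matrix_vector_mul_lid inner_add_right inner_scaleR_right)
  finally show ?thesis
    by (simp add: inner_matrix_vector_transpose power2_norm_eq_inner)
qed

lemma regularized_gram_factor_invertible:
  fixes R :: "real^'m^'m" and B :: "real^'k^'m"
  assumes "transpose R ** R = B ** transpose B + lam *\<^sub>R mat 1" and "0 < lam"
  shows "invertible R"
  unfolding invertible_left_inverse matrix_left_invertible_ker
proof (intro allI impI)
  fix w assume "R *v w = 0"
  hence "(norm (transpose B *v w))\<^sup>2 + lam * (norm w)\<^sup>2 = 0"
    using norm_sq_matrix_vector_gram[OF assms(1), of w] by simp
  thus "w = 0" using \<open>0 < lam\<close> by (simp add: add_nonneg_eq_0_iff)
qed

lemma top_rows_matrix_mult: "top_rows (V ** Z) = top_rows V ** Z"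
  by (simp add: top_rows_def matrix_matrix_mult_def vec_eq_iff)

lemma top_rows_transpose_aug_mat: "top_rows (transpose (aug_mat A lam)) = transpose A"
  by (simp add: top_rows_def transpose_def aug_mat_def vec_eq_iff)

lemma sum_UNIV_Plus:
  "sum f (UNIV :: ('a::finite + 'b::finite) set) = (\<Sum>k\<in>UNIV. f (Inl k)) + (\<Sum>k\<in>UNIV. f (Inr k))"
proof -
  have "sum f (UNIV :: ('a + 'b) set) = sum f (UNIV <+> UNIV)" by simp
  also have "\<dots> = sum (f \<circ> Inl) UNIV + sum (f \<circ> Inr) UNIV" by (rule sum.Plus) auto
  finally show ?thesis by (simp add: comp_def)
qed

lemma norm_sq_transpose_aug_mat:
  assumes "0 \<le> lam"
  shows "(norm (transpose (aug_mat A lam) *v w))\<^sup>2 = (norm (transpose A *v w))\<^sup>2 + lam * (norm w)\<^sup>2"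
proof -
  have top: "(transpose (aug_mat A lam) *v w) $ Inl k = (transpose A *v w) $ k" for k
    using top_rows_transpose_aug_mat[of A lam]
    by (simp add: top_rows_def matrix_vector_mult_def vec_eq_iff)
  have bottom: "(transpose (aug_mat A lam) *v w) $ Inr k = sqrt lam * w $ k" for k
    by (simp add: matrix_vector_mult_def transpose_def aug_mat_def if_distrib[of "\<lambda>x. x * _"]
        sum.delta cong: if_cong)
  have "(norm (transpose (aug_mat A lam) *v w))\<^sup>2
      = (\<Sum>k\<in>UNIV. (transpose (aug_mat A lam) *v w) $ Inl k * (transpose (aug_mat A lam) *v w) $ Inl k)
      + (\<Sum>k\<in>UNIV. (transpose (aug_mat A lam) *v w) $ Inr k * (transpose (aug_mat A lam) *v w) $ Inr k)"
    by (simp only: power2_norm_eq_inner inner_vec_def sum_UNIV_Plus inner_real_def)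
  also have "\<dots> = (norm (transpose A *v w))\<^sup>2 + lam * (norm w)\<^sup>2"
    unfolding top bottom using assms
    by (simp add: power2_norm_eq_inner inner_vec_def sum_distrib_left algebra_simps
        mult.assoc[of "sqrt lam" "sqrt lam", symmetric])
  finally show ?thesis .
qed

lemma quadratic_form_le_spec_norm:
  fixes E :: "real^'m^'m"
  shows "\<bar>y \<bullet> (E *v y)\<bar> \<le> spec_norm E * (norm y)\<^sup>2"
proof -
  have "\<bar>y \<bullet> (E *v y)\<bar> \<le> norm y * norm (E *v y)" by (rule Cauchy_Schwarz_ineq2)
  also have "\<dots> \<le> norm y * (spec_norm E * norm y)"
    unfolding spec_norm_def
    by (intro mult_left_mono onorm[OF matrix_vector_mul_bounded_linear]) simp
  finally show ?thesis by (simp add: power2_eq_square algebra_simps)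
qed

lemma sketched_gram_relative_error:
  fixes A :: "real^'n^'m" and V :: "real^'m^('n + 'm)" and Z :: "real^'m^'m" and X :: "real^'s^'n"
  assumes "0 \<le> lam" and VV: "transpose V ** V = mat 1"
    and factor: "transpose (aug_mat A lam) = V ** Z"
    and embedding: "spec_norm (transpose (top_rows V) ** X ** transpose X ** top_rows V
                    - transpose (top_rows V) ** top_rows V) \<le> \<epsilon>"
  shows "\<bar>(norm (transpose (A ** X) *v w))\<^sup>2 + lam * (norm w)\<^sup>2
            - (norm (transpose (aug_mat A lam) *v w))\<^sup>2\<bar>
         \<le> \<epsilon> * (norm (transpose (aug_mat A lam) *v w))\<^sup>2"
proof -
  define V1 where "V1 = top_rows V"
  define E where "E = transpose V1 ** X ** transpose X ** V1 - transpose V1 ** V1"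
  define y where "y = Z *v w"
  have Dw: "norm (transpose (aug_mat A lam) *v w) = norm y"
    using norm_orthonormal_columns[OF VV] by (simp add: factor y_def matrix_vector_mul_assoc[symmetric])
  have Aw: "transpose A *v w = V1 *v y"
    using arg_cong[OF factor, of top_rows]
    by (simp add: top_rows_transpose_aug_mat top_rows_matrix_mult V1_def y_def matrix_vector_mul_assoc)
  have XAw: "transpose (A ** X) *v w = transpose X *v (transpose A *v w)"
    by (simp only: matrix_transpose_mul matrix_vector_mul_assoc)
  have "transpose V1 ** X ** transpose X ** V1 = transpose (transpose X ** V1) ** (transpose X ** V1)"
    by (simp add: matrix_transpose_mul matrix_mul_assoc)
  hence E_form: "y \<bullet> (E *v y) = (norm (transpose X *v (V1 *v y)))\<^sup>2 - (norm (V1 *v y))\<^sup>2"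
    by (simp add: E_def matrix_vector_mult_diff_rdistrib inner_diff_right inner_gram_matrix
        matrix_vector_mul_assoc)
  have "(norm (transpose (A ** X) *v w))\<^sup>2 + lam * (norm w)\<^sup>2
          - (norm (transpose (aug_mat A lam) *v w))\<^sup>2 = y \<bullet> (E *v y)"
    unfolding E_form XAw norm_sq_transpose_aug_mat[OF \<open>0 \<le> lam\<close>] Aw by simp
  moreover have "\<bar>y \<bullet> (E *v y)\<bar> \<le> \<epsilon> * (norm y)\<^sup>2"
    using quadratic_form_le_spec_norm[of y E] embedding
    by (simp add: E_def V1_def) (meson mult_right_mono order_trans zero_le_power2)
  ultimately show ?thesis unfolding Dw by simp
qed

lemma ratio_bounds_of_relative_error:
  fixes r d \<epsilon> \<mu> :: real
  assumes "0 < r" and "0 \<le> \<epsilon>" and "\<epsilon> < 1" and "\<bar>r - d\<bar> \<le> \<epsilon> * d" and "d = \<mu> * r"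
  shows "1 / (1 + \<epsilon>) \<le> \<mu> \<and> \<mu> \<le> 1 / (1 - \<epsilon>)"
proof -
  have "1 * r \<le> ((1 + \<epsilon>) * \<mu>) * r" and "((1 - \<epsilon>) * \<mu>) * r \<le> 1 * r"
    using assms(4,5) by (auto simp: abs_le_iff algebra_simps)
  hence "1 \<le> (1 + \<epsilon>) * \<mu>" and "(1 - \<epsilon>) * \<mu> \<le> 1"
    using \<open>0 < r\<close> by (simp_all only: mult_le_cancel_right_pos)
  thus ?thesis using assms(2,3) by (simp add: field_simps)
qed

theorem theorem3p4:
  fixes A :: "real^'n^'m" and lam :: real and \<epsilon> :: real
    and U :: "real^'m^'m" and \<sigma> :: "real^'m" and V :: "real^'m^('n + 'm)"
    and X :: "real^'s^'n" and R :: "real^'m^'m"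
  assumes "CARD('m) \<le> CARD('n)"
    and "lam > 0"
    and "transpose U ** U = mat 1"
    and "\<forall>i. \<sigma> $ i \<ge> 0"
    and "transpose V ** V = mat 1"
    and "aug_mat A lam = U ** diag_mat \<sigma> ** transpose V"
    and "0 < \<epsilon>" and "\<epsilon> < 1"
    and "spec_norm (transpose (top_rows V) ** X ** transpose X ** top_rows V
                    - transpose (top_rows V) ** top_rows V) \<le> \<epsilon>"
    and "transpose R ** R = (A ** X) ** transpose (A ** X) + lam *\<^sub>R mat 1"
  shows "kappa2 (matrix_inv (transpose R) ** aug_mat A lam) \<le> sqrt ((1 + \<epsilon>) / (1 - \<epsilon>))"
proof -
  have "invertible R" by (rule regularized_gram_factor_invertible[OF assms(10,2)])
  have factor: "transpose (aug_mat A lam) = V ** transpose (U ** diag_mat \<sigma>)"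
    using assms(6) by (simp add: matrix_transpose_mul)
  have "kappa2 (matrix_inv (transpose R) ** aug_mat A lam) \<le> sqrt ((1 / (1 - \<epsilon>)) / (1 / (1 + \<epsilon>)))"
  proof (rule kappa2_le_sqrt_ratio)
    fix \<mu> v
    assume "v \<noteq> 0" and "(matrix_inv (transpose R) ** aug_mat A lam
        ** transpose (matrix_inv (transpose R) ** aug_mat A lam)) *v v = \<mu> *s v"
    then obtain w where "R *v w \<noteq> 0"
      and "(norm (transpose (aug_mat A lam) *v w))\<^sup>2 = \<mu> * (norm (R *v w))\<^sup>2"
      using eigenvalue_preconditioned_gram[OF \<open>invertible R\<close>] by blast
    moreover have "\<bar>(norm (R *v w))\<^sup>2 - (norm (transpose (aug_mat A lam) *v w))\<^sup>2\<bar>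
        \<le> \<epsilon> * (norm (transpose (aug_mat A lam) *v w))\<^sup>2"
      using sketched_gram_relative_error[OF _ assms(5) factor assms(9), of w] \<open>lam > 0\<close>
      unfolding norm_sq_matrix_vector_gram[OF assms(10)] by simp
    ultimately show "1 / (1 + \<epsilon>) \<le> \<mu> \<and> \<mu> \<le> 1 / (1 - \<epsilon>)"
      using assms(7,8) by (intro ratio_bounds_of_relative_error) simp_all
  qed (use assms(7) in simp)
  thus ?thesis using assms(7,8) by (simp add: field_simps)
qed

end
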